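(* For ${\bf n}>0$, the infimum $\inf_{p:\,\mathbb E_p[N]\le{\bf n}}J_-(p)$ over probability distributions $p$ on $\mathbb N_0$ is attained by the geometric distribution $p_k^{\mathrm{geo},{\bf n}}=(1-r)r^k$ with $r={\bf n}/({\bf n}+1)$, and $$\inf_{p:\,\mathbb E_p[N]\le{\bf n}}J_-(p)=-2{\bf n}\log\Big(1+\frac1{\bf n}\Big).$$
   Context: The classical pure-death generator acts on probability distributions $p=(p_n)_{n\in\mathbb N_0}$ by $(\mathcal C_-(p))_n=-np_n+(n+1)p_{n+1}$. $J_-(p)=2\frac{d}{dt}\big|_{t=0}H(e^{t\mathcal C_-}(p))$ with $H(p)=-\sum_np_n\log p_n$, and $\mathbb E_p[N]=\sum_n np_n$. *)

theory Defs
  imports Complex_Main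
begin

definition prob_dist :: "(nat \<Rightarrow> real) \<Rightarrow> bool" where
  "prob_dist p \<longleftrightarrow> (\<forall>n. 0 \<le> p n) \<and> p sums 1"

definition finite_mean :: "(nat \<Rightarrow> real) \<Rightarrow> bool" where
  "finite_mean p \<longleftrightarrow> summable (\<lambda>n. real n * p n)"

definition mean_N :: "(nat \<Rightarrow> real) \<Rightarrow> real" where
  "mean_N p = (\<Sum>n. real n * p n)"

definition entropy :: "(nat \<Rightarrow> real) \<Rightarrow> real" where
  "entropy p = - (\<Sum>n. (if p n = 0 then 0 else p n * ln (p n)))"

definition Cminus :: "(nat \<Rightarrow> real) \<Rightarrow> nat \<Rightarrow> real" where
  "Cminus p n = - real n * p n + real (n + 1) * p (n + 1)"

text \<open>The semigroup e^{t C_-} (t \<ge> 0), written explicitly as binomial thinning with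
  survival probability e^{-t}:
  (e^{t C_-} p)_n = sum_{m} p_{n+m} binom(n+m,n) e^{-n t} (1 - e^{-t})^m.\<close>
definition death_semigroup :: "real \<Rightarrow> (nat \<Rightarrow> real) \<Rightarrow> nat \<Rightarrow> real" where
  "death_semigroup t p n =
     (\<Sum>m. p (n + m) * real ((n + m) choose n) * exp (- t * real n) * (1 - exp (- t)) ^ m)"

text \<open>has_Jminus p J: J_-(p) = 2 d/dt|_{t=0} H(e^{t C_-} p) exists and equals J
  (derivative from the right, as the semigroup is indexed by t \<ge> 0).\<close>
definition has_Jminus :: "(nat \<Rightarrow> real) \<Rightarrow> real \<Rightarrow> bool" where
  "has_Jminus p J \<longleftrightarrow>
     ((\<lambda>t. entropy (death_semigroup t p)) has_real_derivative (J / 2)) (at_right 0)"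

definition geo_dist :: "real \<Rightarrow> nat \<Rightarrow> real" where
  "geo_dist nn k = (1 - nn / (nn + 1)) * (nn / (nn + 1)) ^ k"

end

theory Submission
  imports Defs "HOL-Analysis.Analysis"
begin

text \<open>Write \<open>T\<^sub>s\<close> for binomial thinning with survival probability \<open>s\<close>, so that
  \<open>e\<^bsup>t C\<^sub>-\<^esup> = T\<^bsub>e\<^sup>-\<^sup>t\<^esub>\<close>, and \<open>G\<^sub>m\<close> for the geometric law with mean \<open>m\<close>; thinning maps
  \<open>G\<^sub>m\<close> to \<open>G\<^bsub>s m\<^esub>\<close>. The entropy of a law \<open>q\<close> is its cross entropy against \<open>G\<^sub>m\<close>,
  which depends only on the mean of \<open>q\<close>, minus the relative entropy \<open>D(q \<parallel> G\<^sub>m)\<close>.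
  For \<open>q = T\<^sub>s p\<close> and \<open>m = s n\<close>, the data-processing inequality (Jensen for
  \<open>y ln y - y + 1\<close>) gives \<open>D(T\<^sub>s p \<parallel> T\<^sub>s G\<^sub>n) \<le> D(p \<parallel> G\<^sub>n)\<close>, and both sides vanish for
  \<open>p = G\<^sub>n\<close>. Hence \<open>J\<^sub>-(p)/2\<close> is at least the derivative at \<open>t = 0\<close> of the cross-entropy
  term, \<open>(E\<^sub>p[N] - n)/(n+1) - E\<^sub>p[N] ln(1 + 1/n)\<close>, with equality for \<open>p = G\<^sub>n\<close>; and this
  is at least \<open>-n ln(1 + 1/n)\<close> because \<open>E\<^sub>p[N] \<le> n\<close> and \<open>ln(1 + 1/n) \<ge> 1/(n+1)\<close>.\<close>

lemma sums_triangle_reindex_nonneg: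
  fixes a :: "nat \<Rightarrow> nat \<Rightarrow> real"
  assumes nonneg: "\<And>k n. 0 \<le> a k n"
    and summable: "summable (\<lambda>k. \<Sum>n\<le>k. a k n)"
  shows "summable (\<lambda>m. a (n + m) n)"
    and "(\<lambda>n. \<Sum>m. a (n + m) n) sums (\<Sum>k. \<Sum>n\<le>k. a k n)"
proof -
  define S where "S = (\<Sum>k. \<Sum>n\<le>k. a k n)"
  have rows: "((\<lambda>n. a k n) has_sum (\<Sum>n\<le>k. a k n)) {..k}" for k
    by (intro has_sum_finiteI) auto
  have cols: "((\<lambda>k. \<Sum>n\<le>k. a k n) has_sum S) UNIV"
    unfolding S_def using summable
    by (intro sums_nonneg_imp_has_sum) (auto simp: sums_iff intro: sum_nonneg nonneg)
  have "(\<lambda>(k, n). a k n) summable_on Sigma UNIV atMost"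
    using summable_on_SigmaI[where f = "\<lambda>(k, n). a k n" and g = "\<lambda>k. \<Sum>n\<le>k. a k n"
        and B = atMost] rows cols nonneg
    by (auto simp: summable_on_def)
  then have "((\<lambda>(k, n). a k n) has_sum S) (Sigma UNIV atMost)"
    by (intro has_sum_SigmaI[OF _ cols]) (use rows in auto)
  moreover have "bij_betw (\<lambda>(n, m). (n + m, n)) (UNIV \<times> UNIV) (Sigma UNIV (atMost :: nat \<Rightarrow> _))"
    by (rule bij_betwI[of _ _ _ "\<lambda>(k, n). (n, k - n)"]) auto
  ultimately have double: "((\<lambda>(n, m). a (n + m) n) has_sum S) (UNIV \<times> UNIV)"
    using has_sum_reindex_bij_betw[of "\<lambda>(n, m). (n + m, n)" _ _ "\<lambda>(k, n). a k n" S]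
    by (simp add: case_prod_unfold)
  have row_summable: "summable (\<lambda>m. a (n + m) n)" for n
    using summable_on_SigmaD1[of "\<lambda>n m. a (n + m) n" UNIV "\<lambda>_. UNIV" n] double
      summable_on_imp_summable[of "\<lambda>m. a (n + m) n"]
    by (auto simp: summable_on_def)
  then show "summable (\<lambda>m. a (n + m) n)" .
  have "((\<lambda>m. a (n + m) n) has_sum (\<Sum>m. a (n + m) n)) UNIV" for n
    using row_summable[of n] nonneg by (intro sums_nonneg_imp_has_sum) (auto simp: sums_iff)
  then have "((\<lambda>n. \<Sum>m. a (n + m) n) has_sum S) UNIV"
    using has_sum_SigmaD[OF double] by auto
  then show "(\<lambda>n. \<Sum>m. a (n + m) n) sums (\<Sum>k. \<Sum>n\<le>k. a k n)"
    unfolding S_def by (rule has_sum_imp_sums)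
qed

lemma sum_binomial_weights:
  fixes s :: real
  shows "(\<Sum>n\<le>k. real (k choose n) * s ^ n * (1 - s) ^ (k - n)) = 1"
  using binomial_ring[of s "1 - s" k] by simp

lemma sum_binomial_weights_mean:
  fixes s :: real
  shows "(\<Sum>n\<le>k. real n * (real (k choose n) * s ^ n * (1 - s) ^ (k - n))) = real k * s"
proof (cases k)
  case (Suc j)
  have shift: "real (Suc i) * (real (Suc j choose Suc i) * s ^ Suc i * (1 - s) ^ (Suc j - Suc i))
      = real (Suc j) * s * (real (j choose i) * s ^ i * (1 - s) ^ (j - i))" for i
  proof -
    have "real (Suc i) * real (Suc j choose Suc i) = real (Suc j) * real (j choose i)"
      by (metis Suc_times_binomial of_nat_mult)
    then show ?thesis
      by (simp only: power_Suc diff_Suc_Suc mult.assoc[symmetric]) (simp only: mult_ac)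
  qed
  have "(\<Sum>n\<le>Suc j. real n * (real (Suc j choose n) * s ^ n * (1 - s) ^ (Suc j - n)))
      = (\<Sum>i\<le>j. real (Suc j) * s * (real (j choose i) * s ^ i * (1 - s) ^ (j - i)))"
    unfolding sum.atMost_Suc_shift by (simp only: of_nat_0 mult_zero_left add_0 shift)
  also have "\<dots> = real (Suc j) * s"
    by (simp add: sum_distrib_left[symmetric] sum_binomial_weights)
  finally show ?thesis using Suc by simp
qed simp

lemma negative_binomial_sums:
  fixes x :: real
  assumes "0 \<le> x" "x < 1"
  shows "(\<lambda>m. real ((n + m) choose n) * x ^ m) sums (1 / (1 - x) ^ (n + 1))"
proof -
  have "(\<lambda>m. (- real (n + 1) gchoose m) * (- x) ^ m) sums (1 + - x) powr (- real (n + 1))"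
    using assms by (intro gen_binomial_real) simp
  moreover have "(- real (n + 1) gchoose m) * (- x) ^ m = real ((n + m) choose n) * x ^ m" for m
  proof -
    have "(- real (n + 1) gchoose m) = (- 1) ^ m * (real (n + m) gchoose m)"
      by (subst gbinomial_negated_upper) (simp add: add_ac)
    also have "real (n + m) gchoose m = real ((n + m) choose m)"
      by (rule binomial_gbinomial[symmetric])
    also have "(n + m) choose m = (n + m) choose n"
      by (metis binomial_symmetric le_add2 add_diff_cancel_right')
    finally show ?thesis by (simp add: power_minus' mult_ac)
  qed
  moreover have "(1 + - x) powr (- real (n + 1)) = 1 / (1 - x) ^ (n + 1)"
  proof -
    have "(1 + - x) powr (- real (n + 1)) = inverse ((1 - x) powr real (n + 1))"
      by (metis powr_minus uminus_add_conv_diff add.commute)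
    also have "(1 - x) powr real (n + 1) = (1 - x) ^ (n + 1)"
      using assms by (intro powr_realpow) simp
    finally show ?thesis by (simp add: divide_inverse)
  qed
  ultimately show ?thesis by simp
qed

definition thinning :: "real \<Rightarrow> (nat \<Rightarrow> real) \<Rightarrow> nat \<Rightarrow> real" where
  "thinning s p n = (\<Sum>m. p (n + m) * real ((n + m) choose n) * s ^ n * (1 - s) ^ m)"

lemma death_semigroup_eq_thinning: "death_semigroup t p = thinning (exp (- t)) p"
proof
  fix n
  have "exp (- t * real n) = exp (- t) ^ n"
    by (simp add: exp_of_nat_mult[symmetric] mult.commute)
  then show "death_semigroup t p n = thinning (exp (- t)) p n"
    unfolding death_semigroup_def thinning_def by simp
qed

lemma prob_dist_le_1:
  assumes "prob_dist p"
  shows "p n \<le> 1"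
proof -
  have "sum p {n} \<le> suminf p"
    using assms by (intro sum_le_suminf) (auto simp: prob_dist_def sums_iff)
  then show ?thesis
    using assms by (simp add: prob_dist_def sums_iff)
qed

lemma
  assumes p: "prob_dist p" and s: "0 \<le> s" "s \<le> 1"
  shows summable_thinning_terms:
      "summable (\<lambda>m. p (n + m) * real ((n + m) choose n) * s ^ n * (1 - s) ^ m)"
    and thinning_sums_1: "thinning s p sums 1"
proof -
  define a where "a = (\<lambda>k n. p k * (real (k choose n) * s ^ n * (1 - s) ^ (k - n)))"
  have nonneg: "0 \<le> a k n" for k n
    using p s unfolding a_def prob_dist_def by auto
  have rows: "(\<Sum>n\<le>k. a k n) = p k" for k
    unfolding a_def by (simp add: sum_distrib_left[symmetric] sum_binomial_weights)
  have p_sums: "p sums 1"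
    using p by (simp add: prob_dist_def)
  then have "summable (\<lambda>k. \<Sum>n\<le>k. a k n)"
    unfolding rows by (simp add: sums_iff)
  moreover have "a (n + m) n = p (n + m) * real ((n + m) choose n) * s ^ n * (1 - s) ^ m" for n m
    unfolding a_def by (simp add: mult_ac)
  ultimately show "summable (\<lambda>m. p (n + m) * real ((n + m) choose n) * s ^ n * (1 - s) ^ m)"
    and "thinning s p sums 1"
    using sums_triangle_reindex_nonneg[of a, OF nonneg] p_sums
    unfolding rows thinning_def by (simp_all add: sums_iff)
qed

lemma thinning_nonneg:
  assumes "prob_dist p" "0 \<le> s" "s \<le> 1"
  shows "0 \<le> thinning s p n"
  unfolding thinning_def using assms summable_thinning_terms[OF assms]
  by (intro suminf_nonneg) (auto simp: prob_dist_def)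

lemma thinning_pos:
  assumes "prob_dist p" "\<And>k. 0 < p k" "0 < s" "s \<le> 1"
  shows "0 < thinning s p n"
  unfolding thinning_def using assms summable_thinning_terms[of p s]
  by (intro suminf_pos2[where i = 0]) (auto simp: prob_dist_def)

lemma prob_dist_thinning:
  assumes "prob_dist p" "0 \<le> s" "s \<le> 1"
  shows "prob_dist (thinning s p)"
  using assms thinning_nonneg thinning_sums_1 by (simp add: prob_dist_def)

lemma
  assumes p: "prob_dist p" "finite_mean p" and s: "0 \<le> s" "s \<le> 1"
  shows finite_mean_thinning: "finite_mean (thinning s p)"
    and mean_N_thinning: "mean_N (thinning s p) = s * mean_N p"
proof -
  define a where "a = (\<lambda>k n. real n * (p k * (real (k choose n) * s ^ n * (1 - s) ^ (k - n))))"
  have nonneg: "0 \<le> a k n" for k n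
    using p s unfolding a_def prob_dist_def by auto
  have rows: "(\<Sum>n\<le>k. a k n) = s * (real k * p k)" for k
    unfolding a_def
    by (simp add: sum_distrib_left[symmetric] mult.left_commute[of _ "p k"] sum_binomial_weights_mean)
  have mean_summable: "summable (\<lambda>k. real k * p k)"
    using p by (simp add: finite_mean_def)
  then have "summable (\<lambda>k. \<Sum>n\<le>k. a k n)"
    unfolding rows by (rule summable_mult)
  then have "(\<lambda>n. \<Sum>m. a (n + m) n) sums (\<Sum>k. \<Sum>n\<le>k. a k n)"
    by (rule sums_triangle_reindex_nonneg(2)[OF nonneg])
  moreover have "(\<Sum>m. a (n + m) n) = real n * thinning s p n" for n
    unfolding a_def thinning_def
    using suminf_mult[OF summable_thinning_terms[OF p(1) s, of n], of "real n"]
    by (simp add: mult_ac)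
  ultimately have "(\<lambda>n. real n * thinning s p n) sums (\<Sum>k. s * (real k * p k))"
    unfolding rows by simp
  moreover have "(\<Sum>k. s * (real k * p k)) = s * mean_N p"
    unfolding mean_N_def by (rule suminf_mult[OF mean_summable])
  ultimately show "finite_mean (thinning s p)" and "mean_N (thinning s p) = s * mean_N p"
    by (auto simp: finite_mean_def mean_N_def sums_iff)
qed

lemma thinning_1 [simp]: "thinning 1 p = p"
proof
  fix n
  have "(\<lambda>m. p (n + m) * real ((n + m) choose n) * 1 ^ n * (1 - 1) ^ m)
      = (\<lambda>m. if m = 0 then p n else 0)"
    by (auto simp: fun_eq_iff)
  then show "thinning 1 p n = p n"
    unfolding thinning_def using sums_single[of 0 "\<lambda>_. p n"] by (simp add: sums_iff)
qed

lemma geo_dist_eq_divide: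
  assumes "m + 1 \<noteq> 0"
  shows "geo_dist m n = m ^ n / (m + 1) ^ (n + 1)"
  using assms unfolding geo_dist_def by (simp add: field_simps power_divide)

lemma geo_dist_pos: "m > 0 \<Longrightarrow> geo_dist m n > 0"
  by (simp add: geo_dist_eq_divide)

lemma ln_geo_dist:
  assumes "m > 0"
  shows "ln (geo_dist m n) = real n * ln m - real (n + 1) * ln (m + 1)"
  using assms by (simp add: geo_dist_eq_divide ln_div ln_realpow del: power_Suc)

lemma prob_dist_geo_dist:
  assumes "m > 0"
  shows "prob_dist (geo_dist m)"
proof -
  define r where "r = m / (m + 1)"
  have r: "0 < r" "r < 1"
    using assms by (auto simp: r_def field_simps)
  have "(\<lambda>n. (1 - r) * r ^ n) sums ((1 - r) * (1 / (1 - r)))"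
    using r by (intro sums_mult geometric_sums) auto
  then show ?thesis
    using r geo_dist_pos[OF assms] unfolding prob_dist_def geo_dist_def r_def[symmetric]
    by (auto intro: less_imp_le)
qed

lemma
  assumes "m > 0"
  shows finite_mean_geo_dist: "finite_mean (geo_dist m)"
    and mean_N_geo_dist: "mean_N (geo_dist m) = m"
proof -
  define r where "r = m / (m + 1)"
  have r: "0 < r" "r < 1" "r / (1 - r) = m"
    using assms by (auto simp: r_def field_simps)
  have "(\<lambda>n. real (Suc n) * r ^ Suc n) sums (r / (1 - r) ^ 2)"
    using sums_mult[OF geometric_deriv_sums[of r], of r] r by (simp add: mult_ac)
  from sums_Suc[OF this] have "(\<lambda>n. real n * r ^ n) sums (r / (1 - r) ^ 2)"
    by simp
  then have "(\<lambda>n. (1 - r) * (real n * r ^ n)) sums ((1 - r) * (r / (1 - r) ^ 2))"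
    by (rule sums_mult)
  moreover have "(1 - r) * (r / (1 - r) ^ 2) = m"
    using r by (simp add: power2_eq_square)
  ultimately have "(\<lambda>n. real n * geo_dist m n) sums m"
    unfolding geo_dist_def r_def[symmetric] by (simp add: mult_ac)
  then show "finite_mean (geo_dist m)" and "mean_N (geo_dist m) = m"
    by (simp_all add: finite_mean_def mean_N_def sums_iff)
qed

lemma thinning_geo_dist:
  assumes m: "m > 0" and s: "0 \<le> s" "s \<le> 1"
  shows "thinning s (geo_dist m) = geo_dist (m * s)"
proof
  fix n
  define r where "r = m / (m + 1)"
  have r: "0 < r" "r < 1"
    using m by (auto simp: r_def field_simps)
  have x: "0 \<le> r * (1 - s)" "r * (1 - s) < 1"
    using r s by (auto intro: le_less_trans[of _ r] mult_left_le)
  have "(\<lambda>j. ((1 - r) * (r * s) ^ n) * (real ((n + j) choose n) * (r * (1 - s)) ^ j))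
      sums (((1 - r) * (r * s) ^ n) * (1 / (1 - r * (1 - s)) ^ (n + 1)))"
    by (rule sums_mult[OF negative_binomial_sums[OF x]])
  moreover have "((1 - r) * (r * s) ^ n) * (real ((n + j) choose n) * (r * (1 - s)) ^ j)
      = geo_dist m (n + j) * real ((n + j) choose n) * s ^ n * (1 - s) ^ j" for j
    unfolding geo_dist_def r_def[symmetric] by (simp add: power_add power_mult_distrib mult_ac)
  moreover have "((1 - r) * (r * s) ^ n) * (1 / (1 - r * (1 - s)) ^ (n + 1)) = geo_dist (m * s) n"
  proof -
    have "1 - r = 1 / (m + 1)" "1 - r * (1 - s) = (m * s + 1) / (m + 1)"
      using m by (simp_all add: r_def field_simps)
    then have "((1 - r) * (r * s) ^ n) * (1 / (1 - r * (1 - s)) ^ (n + 1))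
        = (1 / (m + 1)) * ((m * s) ^ n / (m + 1) ^ n) * ((m + 1) ^ (n + 1) / (m * s + 1) ^ (n + 1))"
      by (simp add: r_def power_divide power_mult_distrib del: power_Suc)
    also have "\<dots> = (m * s) ^ n / (m * s + 1) ^ (n + 1)"
    proof -
      have "(1 / a) * (x / a ^ n) * (a ^ (n + 1) / c) = x / c" if "a \<noteq> 0" for a c x :: real
        using that by (cases "c = 0") (simp_all add: field_simps)
      then show ?thesis using m by simp
    qed
    also have "\<dots> = geo_dist (m * s) n"
      using mult_nonneg_nonneg[OF less_imp_le[OF m] s(1)]
      by (intro geo_dist_eq_divide[symmetric]) linarith
    finally show ?thesis .
  qed
  ultimately show "thinning s (geo_dist m) n = geo_dist (m * s) n"
    unfolding thinning_def by (simp add: sums_iff)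
qed

text \<open>Since \<open>ln 0 = 0\<close> in Isabelle, \<open>kl_fun 0 = 1\<close>, and for \<open>g n > 0\<close> the summand
  \<open>g n * kl_fun (q n / g n)\<close> of \<open>rel_entropy\<close> is the usual \<open>q n ln (q n / g n) - q n + g n\<close>
  with \<open>0 ln 0 = 0\<close>.\<close>

definition kl_fun :: "real \<Rightarrow> real" where
  "kl_fun y = y * ln y - y + 1"

definition rel_entropy :: "(nat \<Rightarrow> real) \<Rightarrow> (nat \<Rightarrow> real) \<Rightarrow> real" where
  "rel_entropy q g = (\<Sum>n. g n * kl_fun (q n / g n))"

lemma kl_fun_0 [simp]: "kl_fun 0 = 1"
  and kl_fun_1 [simp]: "kl_fun 1 = 0"
  by (simp_all add: kl_fun_def)

lemma kl_fun_ge_tangent: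
  assumes "0 < a" "0 \<le> y"
  shows "kl_fun a + ln a * (y - a) \<le> kl_fun y"
proof (cases "y = 0")
  case False
  then have y: "0 < y"
    using assms by simp
  have "ln a - ln y \<le> a / y - 1"
    using ln_le_minus_one[of "a / y"] assms y by (simp add: ln_div)
  then have "y * (ln a - ln y) \<le> a - y"
    using mult_left_mono[of _ _ y] y by (fastforce simp: right_diff_distrib)
  then show ?thesis
    unfolding kl_fun_def by (simp add: algebra_simps)
qed (use assms in \<open>simp add: kl_fun_def\<close>)

lemma kl_fun_nonneg: "0 \<le> y \<Longrightarrow> 0 \<le> kl_fun y"
  using kl_fun_ge_tangent[of 1 y] by simp

lemma rel_entropy_self [simp]: "rel_entropy g g = 0"
proof -
  have self: "g n * kl_fun (g n / g n) = 0" for n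
    by (cases "g n = 0") simp_all
  show ?thesis
    unfolding rel_entropy_def self by simp
qed

lemma kl_fun_jensen_sums:
  assumes w: "\<And>j. 0 \<le> w j" and y: "\<And>j. 0 \<le> y j"
    and W: "w sums W" and W_pos: "W > 0"
    and A: "(\<lambda>j. w j * y j) sums A"
    and B: "(\<lambda>j. w j * kl_fun (y j)) sums B"
  shows "W * kl_fun (A / W) \<le> B"
proof (cases "A = 0")
  case True
  have "\<forall>j. w j * y j = 0"
    using A True w y by (subst suminf_eq_zero_iff[symmetric]) (auto simp: sums_iff)
  then have "w j * kl_fun (y j) = w j" for j
    by (cases "w j = 0") auto
  then have "(\<lambda>j. w j * kl_fun (y j)) = w"
    by (intro ext)
  then have "B = W"
    using B W sums_unique2 by metis
  then show ?thesis
    using True by simp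
next
  case False
  define a where "a = A / W"
  have "0 \<le> A"
    using A w y by (intro sums_le[OF _ sums_zero A]) auto
  then have a: "0 < a"
    using False W_pos by (simp add: a_def)
  have "w j * kl_fun a + ln a * (w j * y j - a * w j) \<le> w j * kl_fun (y j)" for j
    using mult_left_mono[OF kl_fun_ge_tangent[OF a y] w, of j j] by (simp add: algebra_simps)
  moreover have "(\<lambda>j. w j * kl_fun a + ln a * (w j * y j - a * w j))
      sums (W * kl_fun a + ln a * (A - a * W))"
    by (intro sums_add sums_mult sums_diff W A sums_mult2)
  ultimately have "W * kl_fun a + ln a * (A - a * W) \<le> B"
    using B by (rule sums_le)
  then show ?thesis
    using W_pos by (simp add: a_def)
qed

text \<open>\<open>-ln (geo_dist m n) = ln (m + 1) + n ln (1 + 1/m)\<close> is affine in \<open>n\<close>, so the cross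
  entropy of any law with mean \<open>\<mu>\<close> against \<open>geo_dist m\<close> is \<open>geo_cross_entropy m \<mu>\<close>.\<close>

definition geo_cross_entropy :: "real \<Rightarrow> real \<Rightarrow> real" where
  "geo_cross_entropy m \<mu> = ln (m + 1) + \<mu> * ln (1 + 1 / m)"

lemma kl_geo_dist_term_eq:
  assumes m: "m > 0" and y: "0 \<le> y"
  shows "geo_dist m n * kl_fun (y / geo_dist m n)
    = y * ln y + (y * ln (m + 1) + real n * y * ln (1 + 1 / m) - y + geo_dist m n)"
proof (cases "y = 0")
  case False
  have G: "geo_dist m n > 0"
    using geo_dist_pos[OF m] .
  have "geo_dist m n * kl_fun (y / geo_dist m n) = y * ln (y / geo_dist m n) - y + geo_dist m n"
    using G unfolding kl_fun_def by (simp add: field_simps)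
  also have "ln (y / geo_dist m n) = ln y - real n * ln m + real (n + 1) * ln (m + 1)"
    using False y G by (simp add: ln_div ln_geo_dist[OF m])
  also have "ln m = ln (m + 1) - ln (1 + 1 / m)"
    using m by (simp add: ln_div field_simps)
  finally show ?thesis
    by (simp add: algebra_simps)
qed simp

lemma
  assumes m: "m > 0" and q: "prob_dist q" "finite_mean q"
  shows summable_rel_entropy_geo_dist: "summable (\<lambda>n. geo_dist m n * kl_fun (q n / geo_dist m n))"
    and entropy_eq_geo_cross_entropy_minus_rel_entropy:
      "entropy q = geo_cross_entropy m (mean_N q) - rel_entropy q (geo_dist m)"
proof -
  define G where "G = geo_dist m"
  define d where "d = (\<lambda>n. G n * kl_fun (q n / G n))"
  define e where "e = (\<lambda>n. q n * ln (m + 1) + real n * q n * ln (1 + 1 / m) - q n + G n)"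
  have q_nonneg: "0 \<le> q n" for n
    using q by (simp add: prob_dist_def)
  have d_eq: "d n = q n * ln (q n) + e n" for n
    unfolding d_def e_def G_def using kl_geo_dist_term_eq[OF m q_nonneg] .
  have "(\<lambda>n. q n * ln (m + 1) + real n * q n * ln (1 + 1 / m) - q n + G n)
      sums (1 * ln (m + 1) + mean_N q * ln (1 + 1 / m) - 1 + 1)"
    using q prob_dist_geo_dist[OF m] unfolding G_def prob_dist_def finite_mean_def mean_N_def
    by (intro sums_add sums_diff sums_mult2 summable_sums) auto
  then have e_sums: "e sums geo_cross_entropy m (mean_N q)"
    by (simp add: e_def geo_cross_entropy_def)
  have "q n * ln (q n) \<le> 0" for n
    using q_nonneg[of n] prob_dist_le_1[OF q(1), of n]
    by (cases "q n = 0") (auto intro: mult_nonneg_nonpos)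
  moreover have "0 \<le> d n" for n
    unfolding d_def G_def using geo_dist_pos[OF m, of n] q_nonneg[of n]
    by (intro mult_nonneg_nonneg kl_fun_nonneg) auto
  ultimately have "summable d"
    using d_eq by (intro summable_comparison_test'[OF sums_summable[OF e_sums]]) auto
  then show "summable (\<lambda>n. geo_dist m n * kl_fun (q n / geo_dist m n))"
    by (simp add: d_def G_def)
  have "(\<lambda>n. d n - e n) sums (suminf d - geo_cross_entropy m (mean_N q))"
    by (intro sums_diff summable_sums \<open>summable d\<close> e_sums)
  moreover have "(\<lambda>n. d n - e n) = (\<lambda>n. if q n = 0 then 0 else q n * ln (q n))"
    using d_eq by auto
  ultimately show "entropy q = geo_cross_entropy m (mean_N q) - rel_entropy q (geo_dist m)"
    unfolding entropy_def rel_entropy_def by (simp add: sums_iff d_def G_def)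
qed

lemma rel_entropy_thinning_le:
  assumes p: "prob_dist p" and g: "prob_dist g" "\<And>k. 0 < g k" and s: "0 < s" "s \<le> 1"
    and rel_summable: "summable (\<lambda>k. g k * kl_fun (p k / g k))"
  shows "rel_entropy (thinning s p) (thinning s g) \<le> rel_entropy p g"
proof -
  define K where "K = (\<lambda>k n. real (k choose n) * s ^ n * (1 - s) ^ (k - n))"
  define a where "a = (\<lambda>k n. K k n * (g k * kl_fun (p k / g k)))"
  have p_nonneg: "0 \<le> p k" for k
    using p by (simp add: prob_dist_def)
  have nonneg: "0 \<le> a k n" for k n
    unfolding a_def K_def using s g(2)[of k] p_nonneg[of k]
    by (intro mult_nonneg_nonneg kl_fun_nonneg) auto
  have rows: "(\<Sum>n\<le>k. a k n) = g k * kl_fun (p k / g k)" for k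
    unfolding a_def K_def by (simp add: sum_distrib_right[symmetric] sum_binomial_weights)
  have rows_summable: "summable (\<lambda>k. \<Sum>n\<le>k. a k n)"
    unfolding rows by (rule rel_summable)
  have rows_sums: "(\<lambda>n. \<Sum>j. a (n + j) n) sums rel_entropy p g"
    using sums_triangle_reindex_nonneg(2)[OF nonneg rows_summable]
    unfolding rows rel_entropy_def .
  have pointwise: "thinning s g n * kl_fun (thinning s p n / thinning s g n) \<le> (\<Sum>j. a (n + j) n)"
    for n
  proof -
    define w where "w = (\<lambda>j. g (n + j) * K (n + j) n)"
    have K_shift: "K (n + j) n = real ((n + j) choose n) * s ^ n * (1 - s) ^ j" for j
      by (simp add: K_def)
    have "w sums thinning s g n"
      using summable_thinning_terms[OF g(1), of s n] s
      unfolding w_def K_shift thinning_def by (simp add: sums_iff mult_ac)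
    moreover have "(\<lambda>j. w j * (p (n + j) / g (n + j))) sums thinning s p n"
    proof -
      have "w j * (p (n + j) / g (n + j))
          = p (n + j) * real ((n + j) choose n) * s ^ n * (1 - s) ^ j" for j
        unfolding w_def K_shift using g(2)[of "n + j"] by (simp add: field_simps)
      then show ?thesis
        using summable_thinning_terms[OF p, of s n] s by (simp add: thinning_def sums_iff)
    qed
    moreover have "(\<lambda>j. w j * kl_fun (p (n + j) / g (n + j))) sums (\<Sum>j. a (n + j) n)"
      using sums_triangle_reindex_nonneg(1)[OF nonneg rows_summable, of n]
      unfolding w_def a_def by (simp add: summable_sums mult_ac)
    moreover have "0 \<le> w j" for j
      unfolding w_def K_def using g(2)[of "n + j"] s by simp
    ultimately show ?thesis
      using p_nonneg g(2) thinning_pos[OF g s]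
      by (intro kl_fun_jensen_sums) (auto intro: divide_nonneg_pos)
  qed
  have "0 \<le> thinning s g n * kl_fun (thinning s p n / thinning s g n)" for n
    using thinning_pos[OF g s, of n] thinning_nonneg[OF p, of s n] s
    by (intro mult_nonneg_nonneg kl_fun_nonneg) auto
  then have "summable (\<lambda>n. thinning s g n * kl_fun (thinning s p n / thinning s g n))"
    using pointwise by (intro summable_comparison_test'[OF sums_summable[OF rows_sums]]) auto
  then have "rel_entropy (thinning s p) (thinning s g) \<le> (\<Sum>n. \<Sum>j. a (n + j) n)"
    unfolding rel_entropy_def using pointwise rows_sums by (intro suminf_le) (auto simp: sums_iff)
  also have "\<dots> = rel_entropy p g"
    using rows_sums by (simp add: sums_iff)
  finally show ?thesis .
qed

lemma
  assumes nn: "nn > 0" and p: "prob_dist p" "finite_mean p" and t: "0 \<le> t"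
  shows entropy_death_semigroup:
      "entropy (death_semigroup t p) = geo_cross_entropy (nn * exp (- t)) (exp (- t) * mean_N p)
         - rel_entropy (death_semigroup t p) (geo_dist (nn * exp (- t)))"
    and rel_entropy_death_semigroup_le:
      "rel_entropy (death_semigroup t p) (geo_dist (nn * exp (- t))) \<le> rel_entropy p (geo_dist nn)"
proof -
  define s where "s = exp (- t)"
  have s: "0 < s" "s \<le> 1"
    using t by (auto simp: s_def)
  have "entropy (thinning s p) = geo_cross_entropy (nn * s) (mean_N (thinning s p))
      - rel_entropy (thinning s p) (geo_dist (nn * s))"
    using nn s prob_dist_thinning[OF p(1)] finite_mean_thinning[OF p]
    by (intro entropy_eq_geo_cross_entropy_minus_rel_entropy) auto
  then show "entropy (death_semigroup t p) = geo_cross_entropy (nn * exp (- t)) (exp (- t) * mean_N p)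
      - rel_entropy (death_semigroup t p) (geo_dist (nn * exp (- t)))"
    using mean_N_thinning[OF p, of s] s by (simp add: death_semigroup_eq_thinning s_def)
  have "rel_entropy (thinning s p) (thinning s (geo_dist nn)) \<le> rel_entropy p (geo_dist nn)"
    using p(1) prob_dist_geo_dist[OF nn] geo_dist_pos[OF nn] s
      summable_rel_entropy_geo_dist[OF nn p]
    by (rule rel_entropy_thinning_le)
  then show "rel_entropy (death_semigroup t p) (geo_dist (nn * exp (- t)))
      \<le> rel_entropy p (geo_dist nn)"
    using thinning_geo_dist[OF nn less_imp_le[OF s(1)] s(2)]
    by (simp add: death_semigroup_eq_thinning s_def)
qed

lemma geo_cross_entropy_death_has_real_derivative:
  assumes nn: "nn > 0"
  shows "((\<lambda>t. geo_cross_entropy (nn * exp (- t)) (exp (- t) * \<mu>)) has_real_derivative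
      (\<mu> - nn) / (nn + 1) - \<mu> * ln (1 + 1 / nn)) (at 0)"
proof -
  have "geo_cross_entropy (nn * exp (- t)) (exp (- t) * \<mu>)
      = ln (nn * exp (- t) + 1) + \<mu> * exp (- t) * ln (1 + exp t / nn)" for t
    by (simp add: geo_cross_entropy_def exp_minus field_simps)
  moreover have "((\<lambda>t. ln (nn * exp (- t) + 1) + \<mu> * exp (- t) * ln (1 + exp t / nn))
      has_real_derivative - nn / (nn + 1) + \<mu> * (1 / (nn + 1) - ln (1 + 1 / nn))) (at 0)"
    using nn by (auto intro!: derivative_eq_intros simp: field_simps add_pos_pos)
  moreover have "- nn / (nn + 1) + \<mu> * (1 / (nn + 1) - ln (1 + 1 / nn))
      = (\<mu> - nn) / (nn + 1) - \<mu> * ln (1 + 1 / nn)"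
    by (simp add: diff_divide_distrib right_diff_distrib)
  ultimately show ?thesis
    by simp
qed

lemma right_derivative_nonneg_at_local_min:
  fixes f :: "real \<Rightarrow> real"
  assumes "(f has_real_derivative D) (at_right x)" "eventually (\<lambda>y. f x \<le> f y) (at_right x)"
  shows "0 \<le> D"
proof (rule tendsto_lowerbound)
  show "((\<lambda>y. (f y - f x) / (y - x)) \<longlongrightarrow> D) (at_right x)"
    using assms(1) by (simp add: has_field_derivative_iff)
  show "eventually (\<lambda>y. 0 \<le> (f y - f x) / (y - x)) (at_right x)"
    using assms(2) eventually_at_right_less[of x] by eventually_elim simp
qed simp

lemma Jminus_lower_bound:
  assumes nn: "nn > 0" and p: "prob_dist p" "finite_mean p" and J: "has_Jminus p J"
  shows "(mean_N p - nn) / (nn + 1) - mean_N p * ln (1 + 1 / nn) \<le> J / 2"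
proof -
  define h where "h = (\<lambda>t. geo_cross_entropy (nn * exp (- t)) (exp (- t) * mean_N p))"
  define f where "f = (\<lambda>t. entropy (death_semigroup t p) - h t)"
  have "(f has_real_derivative J / 2 - ((mean_N p - nn) / (nn + 1) - mean_N p * ln (1 + 1 / nn)))
      (at_right 0)"
    unfolding f_def h_def using J unfolding has_Jminus_def
    by (rule DERIV_diff[OF _ has_field_derivative_at_within
          [OF geo_cross_entropy_death_has_real_derivative[OF nn]]])
  moreover have "eventually (\<lambda>t. f 0 \<le> f t) (at_right 0)"
    using eventually_at_right_less[of "0::real"]
  proof eventually_elim
    case (elim t)
    show ?case
      using entropy_death_semigroup[OF nn p, of t] entropy_death_semigroup[OF nn p, of 0]
        rel_entropy_death_semigroup_le[OF nn p, of t] elim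
      by (simp add: f_def h_def death_semigroup_eq_thinning)
  qed
  ultimately show ?thesis
    using right_derivative_nonneg_at_local_min by (metis diff_ge_0_iff_ge)
qed

lemma has_Jminus_geo_dist:
  assumes nn: "nn > 0"
  shows "has_Jminus (geo_dist nn) (- 2 * nn * ln (1 + 1 / nn))"
proof -
  have entropy_eq: "entropy (death_semigroup t (geo_dist nn))
      = geo_cross_entropy (nn * exp (- t)) (exp (- t) * nn)" if "0 \<le> t" for t
    using entropy_death_semigroup[OF nn prob_dist_geo_dist[OF nn] finite_mean_geo_dist[OF nn] that]
      thinning_geo_dist[OF nn, of "exp (- t)"] that
    by (simp add: mean_N_geo_dist[OF nn] death_semigroup_eq_thinning)
  have "eventually (\<lambda>t. entropy (death_semigroup t (geo_dist nn))
      = geo_cross_entropy (nn * exp (- t)) (exp (- t) * nn)) (at_right 0)"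
    using eventually_at_right_less[of "0::real"] by eventually_elim (simp add: entropy_eq)
  note derivative_cong = has_field_derivative_cong_eventually[OF this entropy_eq[OF order_refl]]
  have "((\<lambda>t. geo_cross_entropy (nn * exp (- t)) (exp (- t) * nn)) has_real_derivative
      - 2 * nn * ln (1 + 1 / nn) / 2) (at_right 0)"
    using has_field_derivative_at_within[OF geo_cross_entropy_death_has_real_derivative[OF nn, of nn]]
    by simp
  then show ?thesis
    unfolding has_Jminus_def derivative_cong .
qed

lemma ln_one_plus_inverse_ge:
  fixes x :: real
  assumes "x > 0"
  shows "1 / (x + 1) \<le> ln (1 + 1 / x)"
proof -
  have "ln (x / (x + 1)) \<le> x / (x + 1) - 1"
    using assms by (intro ln_le_minus_one) simp
  moreover have "ln (x / (x + 1)) = - ln (1 + 1 / x)"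
    using assms by (simp add: ln_div field_simps)
  moreover have "x / (x + 1) - 1 = - (1 / (x + 1))"
    using assms by (simp add: field_simps)
  ultimately show ?thesis
    by linarith
qed

theorem theorem12:
  fixes nn :: real
  assumes "nn > 0"
  shows "prob_dist (geo_dist nn) \<and> finite_mean (geo_dist nn) \<and> mean_N (geo_dist nn) \<le> nn
     \<and> has_Jminus (geo_dist nn) (- 2 * nn * ln (1 + 1 / nn))
     \<and> (\<forall>p J. prob_dist p \<and> finite_mean p \<and> mean_N p \<le> nn \<and> has_Jminus p J
              \<longrightarrow> - 2 * nn * ln (1 + 1 / nn) \<le> J)"
proof (intro conjI allI impI)
  show "prob_dist (geo_dist nn)" "finite_mean (geo_dist nn)" "mean_N (geo_dist nn) \<le> nn"
    using prob_dist_geo_dist finite_mean_geo_dist mean_N_geo_dist assms by auto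
  show "has_Jminus (geo_dist nn) (- 2 * nn * ln (1 + 1 / nn))"
    using has_Jminus_geo_dist[OF assms] .
next
  fix p J
  assume "prob_dist p \<and> finite_mean p \<and> mean_N p \<le> nn \<and> has_Jminus p J"
  then have p: "prob_dist p" "finite_mean p" and mean: "mean_N p \<le> nn" and J: "has_Jminus p J"
    by auto
  have "(nn - mean_N p) * (1 / (nn + 1)) \<le> (nn - mean_N p) * ln (1 + 1 / nn)"
    using mean ln_one_plus_inverse_ge[OF assms] by (intro mult_left_mono) auto
  moreover have "(mean_N p - nn) / (nn + 1) = - ((nn - mean_N p) * (1 / (nn + 1)))"
    by (simp add: minus_divide_left)
  ultimately have "- nn * ln (1 + 1 / nn) \<le> (mean_N p - nn) / (nn + 1) - mean_N p * ln (1 + 1 / nn)"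
    by (simp add: left_diff_distrib)
  then show "- 2 * nn * ln (1 + 1 / nn) \<le> J"
    using Jminus_lower_bound[OF assms p J] by linarith
qed

end
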